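(* Let $\mathcal{H}$ be a complex Hilbert space of finite dimension $n\ge2$, $m\ge2$, $\mathcal{G}=(\{1,\dots,m\},E)$ a connected undirected graph, $\alpha\in(0,1)$, and $\sigma$ a self-adjoint operator on $\mathcal{H}$. Consider the quantum gossip algorithm: at each time $t$ an edge $(j,k)\in E$ is selected and $\rho(t+1)=(1-\alpha)\rho(t)+\alpha U_{(j,k)}\rho(t)U_{(j,k)}^\dagger$, where edges are selected either by periodically cycling through all edges, or independently at random according to a fixed distribution $\{q_{j,k}>0\}$ (in which case one considers either the expected evolution $\rho(t+1)=\sum q_{j,k}\big((1-\alpha)\rho(t)+\alpha U_{(j,k)}\rho(t)U_{(j,k)}^\dagger\big)$ or individual random trajectories). Let $z_\ell(t)=\mathrm{Tr}(\rho(t)\sigma^{(\ell)})$. Then under each of these edge-selection strategies, for every $\ell\in\{1,\dots,m\}$, $z_\ell(t)$ asymptotically converges to $\frac1m\sum_{k=1}^m z_k(0)$ (for random trajectories, in the sense that for any $\delta,\varepsilon>0$ there is $T$ with $\mathbb{P}[\sum_\ell |z_\ell(T)-\bar z|^2>\varepsilon\sum_\ell|z_\ell(0)-\bar z|^2]<\delta$, where $\bar z=\frac1m\sum_k z_k(0)$).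
   Context: For $X$ an operator on $\mathcal{H}$, $X^{(i)}=I^{\otimes(i-1)}\otimes X\otimes I^{\otimes(m-i)}$; $U_{(j,k)}$ is the unitary on $\mathcal{H}^{\otimes m}$ swapping tensor factors $j$ and $k$. *)

theory Defs
  imports "HOL-Probability.Probability" "HOL-Combinatorics.Transposition"
begin

text \<open>Operators on H^(tensor m), H = C^n (with a fixed orthonormal basis), represented by
  their matrix entries with respect to the product basis |a> where a ranges over
  functions {..<m} -> {..<n}. Tensor factors are indexed 0..m-1.\<close>

type_synonym cop = "(nat \<Rightarrow> nat) \<Rightarrow> (nat \<Rightarrow> nat) \<Rightarrow> complex"

definition idx :: "nat \<Rightarrow> nat \<Rightarrow> (nat \<Rightarrow> nat) set" where
  "idx m n = ({..<m} \<rightarrow>\<^sub>E {..<n})"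

definition mmul :: "(nat \<Rightarrow> nat) set \<Rightarrow> cop \<Rightarrow> cop \<Rightarrow> cop" where
  "mmul I A B = (\<lambda>a c. \<Sum>b\<in>I. A a b * B b c)"

definition adj :: "cop \<Rightarrow> cop" where
  "adj A = (\<lambda>a b. cnj (A b a))"

definition tr :: "(nat \<Rightarrow> nat) set \<Rightarrow> cop \<Rightarrow> complex" where
  "tr I A = (\<Sum>a\<in>I. A a a)"

text \<open>The swap unitary U_(j,k): U |b> = |b o (j k)>.\<close>
definition swap_op :: "nat \<Rightarrow> nat \<Rightarrow> cop" where
  "swap_op j k = (\<lambda>a b. if a = b \<circ> Transposition.transpose j k then 1 else 0)"

text \<open>X^(i) = I \<otimes> ... \<otimes> X \<otimes> ... \<otimes> I, X acting on factor i.\<close>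
definition local_op :: "nat \<Rightarrow> (nat \<Rightarrow> nat \<Rightarrow> complex) \<Rightarrow> nat \<Rightarrow> cop" where
  "local_op m X i = (\<lambda>a b. X (a i) (b i) *
      (\<Prod>l\<in>{..<m} - {i}. if a l = b l then 1 else 0))"

definition self_adjoint_mat :: "nat \<Rightarrow> (nat \<Rightarrow> nat \<Rightarrow> complex) \<Rightarrow> bool" where
  "self_adjoint_mat n X \<longleftrightarrow> (\<forall>a<n. \<forall>b<n. X a b = cnj (X b a))"

definition density_op :: "(nat \<Rightarrow> nat) set \<Rightarrow> cop \<Rightarrow> bool" where
  "density_op I \<rho> \<longleftrightarrow>
     (\<forall>a\<in>I. \<forall>b\<in>I. \<rho> a b = cnj (\<rho> b a)) \<and>
     (\<forall>v :: (nat \<Rightarrow> nat) \<Rightarrow> complex.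
        0 \<le> Re (\<Sum>a\<in>I. \<Sum>b\<in>I. cnj (v a) * \<rho> a b * v b)) \<and>
     tr I \<rho> = 1"

text \<open>Undirected graph on vertices {..<m}: each edge {j,k} stored once as (j,k) with j<k.\<close>
definition connected_graph :: "nat \<Rightarrow> (nat \<times> nat) set \<Rightarrow> bool" where
  "connected_graph m E \<longleftrightarrow>
     E \<subseteq> {(j,k). j < k \<and> k < m} \<and> (\<forall>u<m. \<forall>v<m. (u,v) \<in> (E \<union> E\<inverse>)\<^sup>*)"

definition gossip_step :: "(nat \<Rightarrow> nat) set \<Rightarrow> real \<Rightarrow> nat \<Rightarrow> nat \<Rightarrow> cop \<Rightarrow> cop" where
  "gossip_step I \<alpha> j k \<rho> = (\<lambda>a b. of_real (1 - \<alpha>) * \<rho> a b +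
      of_real \<alpha> * mmul I (mmul I (swap_op j k) \<rho>) (adj (swap_op j k)) a b)"

primrec traj :: "(nat \<Rightarrow> nat) set \<Rightarrow> real \<Rightarrow> cop \<Rightarrow> (nat \<Rightarrow> nat \<times> nat) \<Rightarrow> nat \<Rightarrow> cop" where
  "traj I \<alpha> \<rho>0 w 0 = \<rho>0"
| "traj I \<alpha> \<rho>0 w (Suc t) = gossip_step I \<alpha> (fst (w t)) (snd (w t)) (traj I \<alpha> \<rho>0 w t)"

primrec exp_traj :: "(nat \<Rightarrow> nat) set \<Rightarrow> real \<Rightarrow> (nat \<times> nat \<Rightarrow> real) \<Rightarrow> (nat \<times> nat) set
                     \<Rightarrow> cop \<Rightarrow> nat \<Rightarrow> cop" where
  "exp_traj I \<alpha> q E \<rho>0 0 = \<rho>0"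
| "exp_traj I \<alpha> q E \<rho>0 (Suc t) = (\<lambda>a b. \<Sum>e\<in>E. of_real (q e) *
      gossip_step I \<alpha> (fst e) (snd e) (exp_traj I \<alpha> q E \<rho>0 t) a b)"

definition zval :: "nat \<Rightarrow> nat \<Rightarrow> (nat \<Rightarrow> nat \<Rightarrow> complex) \<Rightarrow> cop \<Rightarrow> nat \<Rightarrow> complex" where
  "zval m n \<sigma> \<rho> l = tr (idx m n) (mmul (idx m n) \<rho> (local_op m \<sigma> l))"

end

theory Submission
  imports Defs
begin

(*
  The functional z_l(\<rho>) = Tr(\<rho> \<sigma>^(l)) is linear in \<rho>, and conjugation by the swap U_(j,k)
  only relabels tensor factors, so a gossip step acts on the vector z as the classical pairwise
  average z \<mapsto> (1 - \<alpha>) z + \<alpha> (z \<circ> (j k)). This average preserves the mean of z and lowers the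
  squared deviation V = \<Sum>_l |z_l - mean|^2 by exactly 2 \<alpha> (1 - \<alpha>) |z_j - z_k|^2. On a connected
  graph, summing along walks bounds V by a constant times the sum of the squared edge gaps (a
  discrete Poincare inequality). Hence V contracts geometrically over every period of the cyclic
  schedule, at every step of the expected evolution, and in expectation along random
  trajectories, where Markov's inequality gives the probability bound.
*)

section \<open>Pairwise averaging\<close>

definition pair_avg :: "real \<Rightarrow> nat \<Rightarrow> nat \<Rightarrow> (nat \<Rightarrow> complex) \<Rightarrow> nat \<Rightarrow> complex" where
  "pair_avg \<alpha> j k x = (\<lambda>l. of_real (1 - \<alpha>) * x l + of_real \<alpha> * x (Transposition.transpose j k l))"

primrec avg_traj :: "real \<Rightarrow> (nat \<Rightarrow> complex) \<Rightarrow> (nat \<Rightarrow> nat \<times> nat) \<Rightarrow> nat \<Rightarrow> nat \<Rightarrow> complex" where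
  "avg_traj \<alpha> x w 0 = x"
| "avg_traj \<alpha> x w (Suc t) = pair_avg \<alpha> (fst (w t)) (snd (w t)) (avg_traj \<alpha> x w t)"

definition mean :: "nat \<Rightarrow> (nat \<Rightarrow> complex) \<Rightarrow> complex" where
  "mean m x = (\<Sum>l<m. x l) / of_nat m"

definition sqdev :: "nat \<Rightarrow> complex \<Rightarrow> (nat \<Rightarrow> complex) \<Rightarrow> real" where
  "sqdev m c x = (\<Sum>l<m. (cmod (x l - c))\<^sup>2)"

definition edge_gap :: "(nat \<Rightarrow> complex) \<Rightarrow> nat \<times> nat \<Rightarrow> real" where
  "edge_gap x e = (cmod (x (fst e) - x (snd e)))\<^sup>2"

lemma sqdev_nonneg [simp]: "0 \<le> sqdev m c x"
  unfolding sqdev_def by (intro sum_nonneg) auto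

lemma edge_gap_nonneg [simp]: "0 \<le> edge_gap x e"
  unfolding edge_gap_def by simp

lemma sum_comp_transpose:
  assumes "j < m" "k < m"
  shows "(\<Sum>l<m. x (Transposition.transpose j k l)) = (\<Sum>l<m. x l)"
  using sum.reindex[OF inj_on_transpose[of j k "{..<m}"], of x] assms by (simp add: comp_def)

lemma sum_pair_avg:
  assumes "j < m" "k < m"
  shows "(\<Sum>l<m. pair_avg \<alpha> j k x l) = (\<Sum>l<m. x l)"
proof -
  have "(\<Sum>l<m. pair_avg \<alpha> j k x l)
      = of_real (1 - \<alpha>) * (\<Sum>l<m. x l) + of_real \<alpha> * (\<Sum>l<m. x (Transposition.transpose j k l))"
    by (simp add: pair_avg_def sum.distrib sum_distrib_left)
  then show ?thesis
    by (simp add: sum_comp_transpose assms algebra_simps)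
qed

lemma mean_pair_avg: "j < m \<Longrightarrow> k < m \<Longrightarrow> mean m (pair_avg \<alpha> j k x) = mean m x"
  by (simp add: mean_def sum_pair_avg)

lemma cmod_mix_sq_sum:
  fixes a b :: complex
  shows "(cmod (of_real (1 - \<alpha>) * a + of_real \<alpha> * b))\<^sup>2 + (cmod (of_real (1 - \<alpha>) * b + of_real \<alpha> * a))\<^sup>2
       = (cmod a)\<^sup>2 + (cmod b)\<^sup>2 - 2 * \<alpha> * (1 - \<alpha>) * (cmod (a - b))\<^sup>2"
  unfolding cmod_power2 by (simp add: power2_eq_square algebra_simps)

lemma sqdev_pair_avg:
  assumes "j < m" "k < m"
  shows "sqdev m c (pair_avg \<alpha> j k x) = sqdev m c x - 2 * \<alpha> * (1 - \<alpha>) * edge_gap x (j, k)"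
proof (cases "j = k")
  case True
  then show ?thesis by (simp add: pair_avg_def edge_gap_def algebra_simps)
next
  case False
  let ?R = "{..<m} - {j} - {k}"
  have split: "(\<Sum>l<m. f l) = f j + f k + (\<Sum>l\<in>?R. f l)" for f :: "nat \<Rightarrow> real"
    using assms False by (simp add: sum.remove)
  have rest: "(\<Sum>l\<in>?R. (cmod (pair_avg \<alpha> j k x l - c))\<^sup>2) = (\<Sum>l\<in>?R. (cmod (x l - c))\<^sup>2)"
    by (intro sum.cong refl) (auto simp: pair_avg_def algebra_simps)
  have at_j: "pair_avg \<alpha> j k x j - c = of_real (1 - \<alpha>) * (x j - c) + of_real \<alpha> * (x k - c)"
    and at_k: "pair_avg \<alpha> j k x k - c = of_real (1 - \<alpha>) * (x k - c) + of_real \<alpha> * (x j - c)"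
    by (simp_all add: pair_avg_def algebra_simps)
  have "(cmod (pair_avg \<alpha> j k x j - c))\<^sup>2 + (cmod (pair_avg \<alpha> j k x k - c))\<^sup>2
      = (cmod (x j - c))\<^sup>2 + (cmod (x k - c))\<^sup>2 - 2 * \<alpha> * (1 - \<alpha>) * edge_gap x (j, k)"
    unfolding at_j at_k cmod_mix_sq_sum edge_gap_def by simp
  then show ?thesis
    unfolding sqdev_def split[of "\<lambda>l. (cmod (pair_avg \<alpha> j k x l - c))\<^sup>2"] split[of "\<lambda>l. (cmod (x l - c))\<^sup>2"] rest
    by simp
qed

lemma cmod_pair_avg_sub_le:
  assumes "0 \<le> \<alpha>"
  shows "cmod (pair_avg \<alpha> j k x i - x i) \<le> \<alpha> * sqrt (edge_gap x (j, k))"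
proof -
  have eq: "pair_avg \<alpha> j k x i - x i = of_real \<alpha> * (x (Transposition.transpose j k i) - x i)"
    by (simp add: pair_avg_def algebra_simps)
  have "cmod (x (Transposition.transpose j k i) - x i) \<le> cmod (x j - x k)"
    by (cases "i = j"; cases "i = k") (auto simp: norm_minus_commute)
  then show ?thesis
    unfolding eq edge_gap_def using assms by (simp add: norm_mult mult_left_mono)
qed

lemma avg_traj_add: "avg_traj \<alpha> x w (s + t) = avg_traj \<alpha> (avg_traj \<alpha> x w s) (\<lambda>r. w (s + r)) t"
  by (induction t) auto

lemma avg_traj_cong: "(\<And>s. s < t \<Longrightarrow> w s = w' s) \<Longrightarrow> avg_traj \<alpha> x w t = avg_traj \<alpha> x w' t"
  by (induction t) auto

lemma mean_avg_traj:
  assumes "w ` {..<t} \<subseteq> {..<m} \<times> {..<m}"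
  shows "mean m (avg_traj \<alpha> x w t) = mean m x"
  using assms by (induction t) (auto simp: mean_pair_avg lessThan_Suc)

lemma sqdev_avg_traj:
  assumes "w ` {..<t} \<subseteq> {..<m} \<times> {..<m}"
  shows "sqdev m c (avg_traj \<alpha> x w t)
       = sqdev m c x - 2 * \<alpha> * (1 - \<alpha>) * (\<Sum>r<t. edge_gap (avg_traj \<alpha> x w r) (w r))"
  using assms by (induction t) (auto simp: sqdev_pair_avg lessThan_Suc algebra_simps)

lemma sqdev_avg_traj_le:
  assumes "0 \<le> \<alpha>" "\<alpha> \<le> 1" "w ` {..<t} \<subseteq> {..<m} \<times> {..<m}"
  shows "sqdev m c (avg_traj \<alpha> x w t) \<le> sqdev m c x"
proof -
  have "0 \<le> 2 * \<alpha> * (1 - \<alpha>) * (\<Sum>r<t. edge_gap (avg_traj \<alpha> x w r) (w r))"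
    using assms by (intro mult_nonneg_nonneg sum_nonneg) auto
  then show ?thesis using sqdev_avg_traj[OF assms(3)] by simp
qed

lemma cmod_avg_traj_sub_le:
  assumes "0 \<le> \<alpha>" "\<alpha> \<le> 1" "0 \<le> S" and gaps: "\<And>r. r < s \<Longrightarrow> edge_gap (avg_traj \<alpha> x w r) (w r) \<le> S"
  shows "cmod (avg_traj \<alpha> x w s i - x i) \<le> real s * sqrt S"
  using gaps
proof (induction s)
  case 0
  then show ?case by simp
next
  case (Suc s)
  let ?y = "avg_traj \<alpha> x w"
  have "cmod (?y (Suc s) i - ?y s i) \<le> \<alpha> * sqrt (edge_gap (?y s) (w s))"
    using cmod_pair_avg_sub_le[OF assms(1), of "fst (w s)" "snd (w s)"] by simp
  also have "\<dots> \<le> 1 * sqrt S"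
    using assms Suc.prems[of s] by (intro mult_mono) auto
  finally have "cmod (?y (Suc s) i - ?y s i) \<le> sqrt S" by simp
  moreover have "cmod (?y s i - x i) \<le> real s * sqrt S" using Suc by auto
  moreover have "cmod (?y (Suc s) i - x i) \<le> cmod (?y (Suc s) i - ?y s i) + cmod (?y s i - x i)"
    using norm_triangle_ineq[of "?y (Suc s) i - ?y s i" "?y s i - x i"] by simp
  ultimately show ?case by (simp add: algebra_simps)
qed

section \<open>Connected graphs and the Poincar\'e inequality\<close>

lemma connected_graph_finite: "connected_graph m E \<Longrightarrow> finite E"
  unfolding connected_graph_def by (rule finite_subset[of _ "{..<m} \<times> {..<m}"]) auto

lemma connected_graph_edges_lessThan: "connected_graph m E \<Longrightarrow> E \<subseteq> {..<m} \<times> {..<m}"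
  unfolding connected_graph_def by auto

lemma connected_graph_nonempty:
  assumes "connected_graph m E" "2 \<le> m"
  shows "E \<noteq> {}"
proof
  assume "E = {}"
  with assms(1) have "\<forall>u<m. \<forall>v<m. u = v"
    unfolding connected_graph_def by simp
  moreover have "0 < m" "1 < m" using assms(2) by auto
  ultimately have "(0::nat) = 1" by blast
  then show False by simp
qed

definition poincare_const :: "nat \<Rightarrow> (nat \<times> nat) set \<Rightarrow> real" where
  "poincare_const m E = real m * (real (card (E \<union> E\<inverse>)))\<^sup>2"

lemma poincare_const_pos:
  assumes "connected_graph m E" "2 \<le> m"
  shows "0 < poincare_const m E"
proof -
  have "E \<union> E\<inverse> \<noteq> {}" using connected_graph_nonempty[OF assms] by simp
  moreover have "finite (E \<union> E\<inverse>)" using connected_graph_finite[OF assms(1)] by simp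
  ultimately show ?thesis using assms(2) unfolding poincare_const_def by (simp add: card_gt_0_iff)
qed

lemma cmod_sub_le_relpow:
  assumes "\<forall>e\<in>E. cmod (x (fst e) - x (snd e)) \<le> D" and "(u, v) \<in> (E \<union> E\<inverse>) ^^ k"
  shows "cmod (x u - x v) \<le> real k * D"
  using assms(2)
proof (induction k arbitrary: v)
  case 0
  then show ?case by simp
next
  case (Suc k)
  then obtain y where uy: "(u, y) \<in> (E \<union> E\<inverse>) ^^ k" and yv: "(y, v) \<in> E \<union> E\<inverse>"
    by (auto elim: relpow_Suc_E)
  have "cmod (x y - x v) \<le> D"
    using yv assms(1) by (auto simp: norm_minus_commute)
  moreover have "cmod (x u - x y) \<le> real k * D" using Suc.IH[OF uy] .
  moreover have "cmod (x u - x v) \<le> cmod (x u - x y) + cmod (x y - x v)"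
    using norm_triangle_ineq[of "x u - x y" "x y - x v"] by simp
  ultimately show ?case by (simp add: algebra_simps)
qed

text \<open>Any two vertices are joined by a walk of at most card (E \<union> E\<inverse>) edges.\<close>
lemma sqdev_mean_le_of_edge_bound:
  assumes conn: "connected_graph m E" and m: "0 < m"
    and bound: "\<forall>e\<in>E. cmod (x (fst e) - x (snd e)) \<le> D" and D: "0 \<le> D"
  shows "sqdev m (mean m x) x \<le> poincare_const m E * D\<^sup>2"
proof -
  let ?R = "E \<union> E\<inverse>"
  let ?N = "card ?R"
  have finR: "finite ?R" using connected_graph_finite[OF conn] by simp
  have pair: "cmod (x u - x v) \<le> real ?N * D" if "u < m" "v < m" for u v
  proof -
    have "(u, v) \<in> ?R\<^sup>*" using conn that unfolding connected_graph_def by blast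
    then obtain k where k: "k \<le> ?N" "(u, v) \<in> ?R ^^ k"
      using rtrancl_finite_eq_relpow[OF finR] by blast
    have "cmod (x u - x v) \<le> real k * D" using cmod_sub_le_relpow[OF bound k(2)] .
    also have "\<dots> \<le> real ?N * D" using k(1) D by (simp add: mult_right_mono)
    finally show ?thesis .
  qed
  have dev: "cmod (x u - mean m x) \<le> real ?N * D" if "u < m" for u
  proof -
    have "x u - mean m x = (\<Sum>v<m. x u - x v) / of_nat m"
      using m by (simp add: mean_def sum_subtractf field_simps)
    then have "cmod (x u - mean m x) = cmod (\<Sum>v<m. x u - x v) / real m"
      by (simp add: norm_divide)
    also have "\<dots> \<le> (\<Sum>v<m. cmod (x u - x v)) / real m"
      using m by (intro divide_right_mono norm_sum) auto
    also have "\<dots> \<le> (\<Sum>v<m. real ?N * D) / real m"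
      using m pair[OF that] by (intro divide_right_mono sum_mono) auto
    also have "\<dots> = real ?N * D" using m by simp
    finally show ?thesis .
  qed
  have "sqdev m (mean m x) x \<le> (\<Sum>u<m. (real ?N * D)\<^sup>2)"
    unfolding sqdev_def by (intro sum_mono power_mono) (auto simp: dev)
  then show ?thesis by (simp add: poincare_const_def power_mult_distrib)
qed

lemma sqdev_mean_le_edge_gaps:
  assumes conn: "connected_graph m E" and m: "0 < m"
  shows "sqdev m (mean m x) x \<le> poincare_const m E * (\<Sum>e\<in>E. edge_gap x e)"
proof -
  let ?S = "\<Sum>e\<in>E. edge_gap x e"
  have S: "0 \<le> ?S" by (intro sum_nonneg) auto
  have "\<forall>e\<in>E. cmod (x (fst e) - x (snd e)) \<le> sqrt ?S"
  proof
    fix e assume "e \<in> E"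
    then have "edge_gap x e \<le> ?S"
      using connected_graph_finite[OF conn] by (intro member_le_sum) auto
    then show "cmod (x (fst e) - x (snd e)) \<le> sqrt ?S"
      unfolding edge_gap_def using real_le_rsqrt by blast
  qed
  from sqdev_mean_le_of_edge_bound[OF conn m this] S show ?thesis by simp
qed

section \<open>Convergence under the three edge-selection rules\<close>

lemma tendsto_of_sqdev_tendsto_zero:
  assumes "(\<lambda>t. sqdev m c (x t)) \<longlonglongrightarrow> 0" "l < m"
  shows "(\<lambda>t. x t l) \<longlonglongrightarrow> c"
proof -
  have lim: "(\<lambda>t. sqrt (sqdev m c (x t))) \<longlonglongrightarrow> 0"
    using tendsto_real_sqrt[OF assms(1)] by simp
  have "\<forall>t. norm (x t l - c) \<le> sqrt (sqdev m c (x t))"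
  proof
    fix t
    have "(cmod (x t l - c))\<^sup>2 \<le> sqdev m c (x t)"
      unfolding sqdev_def using assms(2) by (intro member_le_sum) auto
    then show "norm (x t l - c) \<le> sqrt (sqdev m c (x t))" using real_le_rsqrt by simp
  qed
  from Lim_null_comparison[OF always_eventually[OF this] lim]
  show ?thesis by (rule LIM_zero_cancel)
qed

lemma contraction_tendsto_zero:
  fixes u :: "nat \<Rightarrow> real"
  assumes "0 < \<kappa>" and nonneg: "\<And>t. 0 \<le> u t" and step: "\<And>t. u (Suc t) \<le> (1 - \<kappa>) * u t"
  shows "u \<longlonglongrightarrow> 0"
proof -
  define \<mu> where "\<mu> = max (1 - \<kappa>) 0"
  have \<mu>: "0 \<le> \<mu>" "\<mu> < 1" using assms(1) unfolding \<mu>_def by auto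
  have bound: "u t \<le> \<mu> ^ t * u 0" for t
  proof (induction t)
    case (Suc t)
    have "u (Suc t) \<le> \<mu> * u t"
      using step[of t] nonneg[of t] unfolding \<mu>_def by (metis max.cobounded1 mult_right_mono order_trans)
    also have "\<dots> \<le> \<mu> * (\<mu> ^ t * u 0)" using Suc \<mu> by (intro mult_left_mono)
    finally show ?case by simp
  qed simp
  have lim: "(\<lambda>t. \<mu> ^ t * u 0) \<longlonglongrightarrow> 0"
    using \<mu> by (intro tendsto_mult_left_zero LIMSEQ_power_zero) auto
  have "\<forall>t. norm (u t) \<le> \<mu> ^ t * u 0"
    using bound nonneg by simp
  from Lim_null_comparison[OF always_eventually[OF this] lim] show ?thesis .
qed

text \<open>Let S be the total squared gap removed during the round. Every edge is used in the round and
  no coordinate drifts by more than L \<surd>S meanwhile, so every initial edge gap is at most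
  (2 L + 1) \<surd>S.\<close>
lemma sqdev_round_contract:
  assumes conn: "connected_graph m E" and m: "2 \<le> m" and \<alpha>: "0 \<le> \<alpha>" "\<alpha> \<le> 1"
    and edges: "w ` {..<L} \<subseteq> E" and cover: "E \<subseteq> w ` {..<L}"
  shows "sqdev m (mean m x) (avg_traj \<alpha> x w L)
       \<le> (1 - 2 * \<alpha> * (1 - \<alpha>) / (poincare_const m E * (2 * real L + 1)\<^sup>2)) * sqdev m (mean m x) x"
proof -
  let ?y = "avg_traj \<alpha> x w" and ?c = "mean m x" and ?b = "2 * \<alpha> * (1 - \<alpha>)"
  let ?K = "poincare_const m E * (2 * real L + 1)\<^sup>2"
  define S where "S = (\<Sum>r<L. edge_gap (?y r) (w r))"
  have S: "0 \<le> S" unfolding S_def by (intro sum_nonneg) auto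
  have gap_le: "edge_gap (?y r) (w r) \<le> S" if "r < L" for r
    unfolding S_def using that by (intro member_le_sum) auto
  have drift: "cmod (?y s i - x i) \<le> real L * sqrt S" if "s < L" for s i
  proof -
    have "cmod (?y s i - x i) \<le> real s * sqrt S"
      using that gap_le by (intro cmod_avg_traj_sub_le[OF \<alpha> S]) auto
    also have "\<dots> \<le> real L * sqrt S" using that S by (intro mult_right_mono) auto
    finally show ?thesis .
  qed
  have "\<forall>e\<in>E. cmod (x (fst e) - x (snd e)) \<le> (2 * real L + 1) * sqrt S"
  proof
    fix e assume "e \<in> E"
    then obtain s where s: "s < L" "w s = e" using cover by blast
    have "cmod (?y s (fst e) - ?y s (snd e)) \<le> sqrt S"
      using gap_le[OF s(1)] s(2) unfolding edge_gap_def by (simp add: real_le_rsqrt)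
    moreover have "cmod (x (fst e) - x (snd e))
        \<le> cmod (?y s (fst e) - ?y s (snd e)) + cmod (?y s (fst e) - x (fst e)) + cmod (?y s (snd e) - x (snd e))"
      using norm_triangle_ineq4[of "?y s (fst e) - ?y s (snd e)" "?y s (fst e) - x (fst e)"]
        norm_triangle_ineq[of "?y s (fst e) - ?y s (snd e) - (?y s (fst e) - x (fst e))" "?y s (snd e) - x (snd e)"]
      by simp
    ultimately show "cmod (x (fst e) - x (snd e)) \<le> (2 * real L + 1) * sqrt S"
      using drift[OF s(1), of "fst e"] drift[OF s(1), of "snd e"] by (simp add: algebra_simps)
  qed
  from sqdev_mean_le_of_edge_bound[OF conn _ this] m S
  have "sqdev m ?c x \<le> ?K * S" by (simp add: power_mult_distrib mult_ac)
  moreover have "0 < ?K" using poincare_const_pos[OF conn m] by simp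
  ultimately have "?b * (sqdev m ?c x / ?K) \<le> ?b * S"
    using \<alpha> by (intro mult_left_mono) (auto simp: divide_le_eq mult.commute)
  moreover have "w ` {..<L} \<subseteq> {..<m} \<times> {..<m}"
    using edges connected_graph_edges_lessThan[OF conn] by blast
  then have "sqdev m ?c (?y L) = sqdev m ?c x - ?b * S"
    unfolding S_def by (rule sqdev_avg_traj)
  moreover have "(1 - ?b / ?K) * sqdev m ?c x = sqdev m ?c x - ?b * (sqdev m ?c x / ?K)"
    by (simp add: left_diff_distrib)
  ultimately show ?thesis by linarith
qed

lemma avg_traj_periodic_tendsto:
  assumes conn: "connected_graph m E" and m: "2 \<le> m" and \<alpha>: "0 < \<alpha>" "\<alpha> < 1"
    and p: "0 < p" and periodic: "\<And>s. w (s + p) = w s" and round: "w ` {..<p} = E" and l: "l < m"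
  shows "(\<lambda>t. avg_traj \<alpha> x w t l) \<longlonglongrightarrow> mean m x"
proof -
  let ?y = "avg_traj \<alpha> x w" and ?c = "mean m x"
  define \<kappa> where "\<kappa> = 2 * \<alpha> * (1 - \<alpha>) / (poincare_const m E * (2 * real p + 1)\<^sup>2)"
  have \<kappa>: "0 < \<kappa>" unfolding \<kappa>_def using poincare_const_pos[OF conn m] \<alpha> by simp
  have shift: "(\<lambda>r. w (q * p + r)) = w" for q
  proof (induction q)
    case (Suc q)
    have "w (Suc q * p + r) = w (q * p + r)" for r
      using periodic[of "q * p + r"] by (simp add: add_ac)
    with Suc show ?case by simp
  qed simp
  have valid: "w ` {..<t} \<subseteq> {..<m} \<times> {..<m}" for t
  proof -
    have "w s \<in> E" for s
    proof -
      have "w s = w (s mod p)"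
        using fun_cong[OF shift[of "s div p"], of "s mod p"] by simp
      then show ?thesis using round p by (metis imageI lessThan_iff mod_less_divisor)
    qed
    then show ?thesis using connected_graph_edges_lessThan[OF conn] by blast
  qed
  have "(\<lambda>q. sqdev m ?c (?y (q * p))) \<longlonglongrightarrow> 0"
  proof (rule contraction_tendsto_zero[OF \<kappa>])
    fix q
    have "?y (Suc q * p) = avg_traj \<alpha> (?y (q * p)) w p"
      using avg_traj_add[of \<alpha> x w "q * p" p] unfolding shift by (simp add: add.commute)
    moreover have "mean m (?y (q * p)) = ?c" by (rule mean_avg_traj[OF valid])
    ultimately show "sqdev m ?c (?y (Suc q * p)) \<le> (1 - \<kappa>) * sqdev m ?c (?y (q * p))"
      using sqdev_round_contract[OF conn m, of \<alpha> w p "?y (q * p)"] round \<alpha> unfolding \<kappa>_def by simp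
  qed simp
  then have rounds: "(\<lambda>t. sqdev m ?c (?y (t div p * p))) \<longlonglongrightarrow> 0"
    by (rule filterlim_compose) (rule filterlim_at_top_div_const_nat[OF p])
  have "\<forall>t. norm (sqdev m ?c (?y t)) \<le> sqdev m ?c (?y (t div p * p))"
  proof
    fix t
    have "?y t = avg_traj \<alpha> (?y (t div p * p)) w (t mod p)"
      using avg_traj_add[of \<alpha> x w "t div p * p" "t mod p"] unfolding shift by simp
    then show "norm (sqdev m ?c (?y t)) \<le> sqdev m ?c (?y (t div p * p))"
      using sqdev_avg_traj_le[OF _ _ valid, of \<alpha> ?c "?y (t div p * p)"] \<alpha> by simp
  qed
  from Lim_null_comparison[OF always_eventually[OF this] rounds]
  show ?thesis using l by (rule tendsto_of_sqdev_tendsto_zero)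
qed

definition expected_avg :: "real \<Rightarrow> (nat \<times> nat \<Rightarrow> real) \<Rightarrow> (nat \<times> nat) set \<Rightarrow> (nat \<Rightarrow> complex) \<Rightarrow> nat \<Rightarrow> complex" where
  "expected_avg \<alpha> q E x = (\<lambda>l. \<Sum>e\<in>E. of_real (q e) * pair_avg \<alpha> (fst e) (snd e) x l)"

lemma square_weighted_sum_le:
  fixes a :: "'e \<Rightarrow> real"
  assumes "finite A" "\<forall>e\<in>A. 0 \<le> q e" "(\<Sum>e\<in>A. q e) = 1"
  shows "(\<Sum>e\<in>A. q e * a e)\<^sup>2 \<le> (\<Sum>e\<in>A. q e * (a e)\<^sup>2)"
proof -
  define s where "s = (\<Sum>e\<in>A. q e * a e)"
  have "0 \<le> (\<Sum>e\<in>A. q e * (a e - s)\<^sup>2)"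
    using assms by (intro sum_nonneg) auto
  also have "(\<Sum>e\<in>A. q e * (a e - s)\<^sup>2)
      = (\<Sum>e\<in>A. q e * (a e)\<^sup>2) - 2 * s * (\<Sum>e\<in>A. q e * a e) + s\<^sup>2 * (\<Sum>e\<in>A. q e)"
    by (simp add: power2_diff algebra_simps sum.distrib sum_subtractf sum_distrib_left)
       (simp add: sum_distrib_right)
  finally show ?thesis using assms(3) unfolding s_def[symmetric] by (simp add: power2_eq_square)
qed

lemma cmod_weighted_sum_sq_le:
  assumes "finite A" "\<forall>e\<in>A. 0 \<le> q e" "(\<Sum>e\<in>A. q e) = 1"
  shows "(cmod (\<Sum>e\<in>A. of_real (q e) * y e))\<^sup>2 \<le> (\<Sum>e\<in>A. q e * (cmod (y e))\<^sup>2)"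
proof -
  have "cmod (\<Sum>e\<in>A. of_real (q e) * y e) \<le> (\<Sum>e\<in>A. cmod (of_real (q e) * y e))"
    by (rule norm_sum)
  also have "\<dots> = (\<Sum>e\<in>A. q e * cmod (y e))"
    using assms(2) by (intro sum.cong refl) (simp add: norm_mult)
  finally have "(cmod (\<Sum>e\<in>A. of_real (q e) * y e))\<^sup>2 \<le> (\<Sum>e\<in>A. q e * cmod (y e))\<^sup>2"
    by (intro power_mono) auto
  also have "\<dots> \<le> (\<Sum>e\<in>A. q e * (cmod (y e))\<^sup>2)"
    by (rule square_weighted_sum_le[OF assms])
  finally show ?thesis .
qed

lemma sqdev_weighted_sum_le:
  assumes "finite A" "\<forall>e\<in>A. 0 \<le> q e" "(\<Sum>e\<in>A. q e) = 1"
  shows "sqdev m c (\<lambda>l. \<Sum>e\<in>A. of_real (q e) * y e l) \<le> (\<Sum>e\<in>A. q e * sqdev m c (y e))"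
proof -
  have centred: "(\<Sum>e\<in>A. of_real (q e) * y e l) - c = (\<Sum>e\<in>A. of_real (q e) * (y e l - c))" for l
  proof -
    have "(\<Sum>e\<in>A. of_real (q e) * (y e l - c))
        = (\<Sum>e\<in>A. of_real (q e) * y e l) - (\<Sum>e\<in>A. of_real (q e)) * c"
      by (simp add: right_diff_distrib sum_subtractf sum_distrib_right)
    moreover have "(\<Sum>e\<in>A. of_real (q e)) = (1::complex)"
      using assms(3) by (simp flip: of_real_sum)
    ultimately show ?thesis by simp
  qed
  have "sqdev m c (\<lambda>l. \<Sum>e\<in>A. of_real (q e) * y e l)
      = (\<Sum>l<m. (cmod (\<Sum>e\<in>A. of_real (q e) * (y e l - c)))\<^sup>2)"
    unfolding sqdev_def centred ..
  also have "\<dots> \<le> (\<Sum>l<m. \<Sum>e\<in>A. q e * (cmod (y e l - c))\<^sup>2)"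
    by (intro sum_mono cmod_weighted_sum_sq_le[OF assms])
  also have "\<dots> = (\<Sum>e\<in>A. q e * sqdev m c (y e))"
    unfolding sqdev_def by (subst sum.swap) (simp add: sum_distrib_left)
  finally show ?thesis .
qed

lemma mean_expected_avg:
  assumes "E \<subseteq> {..<m} \<times> {..<m}" and "(\<Sum>e\<in>E. q e) = 1"
  shows "mean m (expected_avg \<alpha> q E x) = mean m x"
proof -
  have "(\<Sum>l<m. expected_avg \<alpha> q E x l) = (\<Sum>e\<in>E. of_real (q e) * (\<Sum>l<m. pair_avg \<alpha> (fst e) (snd e) x l))"
    unfolding expected_avg_def by (subst sum.swap) (simp add: sum_distrib_left)
  also have "\<dots> = (\<Sum>e\<in>E. of_real (q e)) * (\<Sum>l<m. x l)"
    using assms(1) by (auto simp: sum_pair_avg sum_distrib_right intro!: sum.cong)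
  also have "(\<Sum>e\<in>E. of_real (q e)) = (1::complex)"
    using assms(2) by (simp flip: of_real_sum)
  finally show ?thesis unfolding mean_def by simp
qed

text \<open>Averaging over the edges removes at least the weighted sum of the edge gaps, which by the
  Poincar\'e inequality controls the squared deviation.\<close>
lemma sum_sqdev_pair_avg_le:
  assumes conn: "connected_graph m E" and m: "2 \<le> m" and \<alpha>: "0 \<le> \<alpha>" "\<alpha> \<le> 1"
    and q: "\<forall>e\<in>E. p \<le> q e" "0 \<le> p" "(\<Sum>e\<in>E. q e) = 1"
  shows "(\<Sum>e\<in>E. q e * sqdev m (mean m x) (pair_avg \<alpha> (fst e) (snd e) x))
       \<le> (1 - 2 * \<alpha> * (1 - \<alpha>) * p / poincare_const m E) * sqdev m (mean m x) x"
proof -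
  let ?V = "sqdev m (mean m x) x" and ?b = "2 * \<alpha> * (1 - \<alpha>)" and ?P = "poincare_const m E"
  let ?G = "\<Sum>e\<in>E. edge_gap x e"
  have "(\<Sum>e\<in>E. q e * sqdev m (mean m x) (pair_avg \<alpha> (fst e) (snd e) x))
      = (\<Sum>e\<in>E. q e * (?V - ?b * edge_gap x e))"
    using connected_graph_edges_lessThan[OF conn] by (intro sum.cong refl) (auto simp: sqdev_pair_avg)
  also have "\<dots> = ?V - ?b * (\<Sum>e\<in>E. q e * edge_gap x e)"
    using q(3) by (simp add: right_diff_distrib sum_subtractf sum_distrib_left sum_distrib_right mult_ac
        flip: sum_distrib_right)
  finally have eq: "(\<Sum>e\<in>E. q e * sqdev m (mean m x) (pair_avg \<alpha> (fst e) (snd e) x))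
      = ?V - ?b * (\<Sum>e\<in>E. q e * edge_gap x e)" .
  have "p * ?G \<le> (\<Sum>e\<in>E. q e * edge_gap x e)"
    unfolding sum_distrib_left using q(1) by (intro sum_mono mult_right_mono) auto
  moreover have "?V / ?P \<le> ?G"
    using sqdev_mean_le_edge_gaps[OF conn, of x] poincare_const_pos[OF conn m] m
    by (simp add: divide_le_eq mult.commute)
  ultimately have "?b * p * (?V / ?P) \<le> ?b * (\<Sum>e\<in>E. q e * edge_gap x e)"
    using \<alpha> q(2) by (smt (verit) mult_left_mono mult_nonneg_nonneg mult.assoc)
  then have "?V - ?b * (\<Sum>e\<in>E. q e * edge_gap x e) \<le> ?V - ?b * p * (?V / ?P)"
    by (rule diff_left_mono)
  also have "\<dots> = (1 - ?b * p / ?P) * ?V"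
    by (simp add: left_diff_distrib)
  finally show ?thesis unfolding eq .
qed

lemma expected_avg_iterate_tendsto:
  assumes conn: "connected_graph m E" and m: "2 \<le> m" and \<alpha>: "0 < \<alpha>" "\<alpha> < 1"
    and q: "\<forall>e\<in>E. 0 < q e" "(\<Sum>e\<in>E. q e) = 1" and l: "l < m"
  shows "(\<lambda>t. (expected_avg \<alpha> q E ^^ t) x l) \<longlonglongrightarrow> mean m x"
proof -
  let ?y = "\<lambda>t. (expected_avg \<alpha> q E ^^ t) x" and ?c = "mean m x"
  have finE: "finite E" using connected_graph_finite[OF conn] .
  define p where "p = Min (q ` E)"
  have p: "0 < p" "\<forall>e\<in>E. p \<le> q e"
    unfolding p_def using finE connected_graph_nonempty[OF conn m] q(1) by auto
  define \<kappa> where "\<kappa> = 2 * \<alpha> * (1 - \<alpha>) * p / poincare_const m E"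
  have \<kappa>: "0 < \<kappa>" unfolding \<kappa>_def using poincare_const_pos[OF conn m] \<alpha> p by simp
  have mean: "mean m (?y t) = ?c" for t
    by (induction t) (simp_all add: mean_expected_avg[OF connected_graph_edges_lessThan[OF conn] q(2)])
  have "(\<lambda>t. sqdev m ?c (?y t)) \<longlonglongrightarrow> 0"
  proof (rule contraction_tendsto_zero[OF \<kappa>])
    fix t
    have "sqdev m ?c (?y (Suc t)) \<le> (\<Sum>e\<in>E. q e * sqdev m ?c (pair_avg \<alpha> (fst e) (snd e) (?y t)))"
      unfolding funpow.simps comp_def expected_avg_def
      using finE q by (intro sqdev_weighted_sum_le) auto
    also have "\<dots> \<le> (1 - \<kappa>) * sqdev m ?c (?y t)"
      using sum_sqdev_pair_avg_le[OF conn m _ _ p(2) _ q(2), of \<alpha> "?y t"] p \<alpha> mean[of t]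
      unfolding \<kappa>_def by simp
    finally show "sqdev m ?c (?y (Suc t)) \<le> (1 - \<kappa>) * sqdev m ?c (?y t)" .
  qed simp
  then show ?thesis using l by (rule tendsto_of_sqdev_tendsto_zero)
qed

lemma finite_set_pmf_Pi_pmf:
  "finite A \<Longrightarrow> finite (set_pmf Q) \<Longrightarrow> finite (set_pmf (Pi_pmf A d (\<lambda>_. Q)))"
  by (auto simp: set_Pi_pmf)

lemma set_pmf_Pi_pmf_lessThan_image:
  "f \<in> set_pmf (Pi_pmf {..<T::nat} d (\<lambda>_. Q)) \<Longrightarrow> f ` {..<T} \<subseteq> set_pmf Q"
  by (auto simp: set_Pi_pmf PiE_dflt_def)

lemma expectation_Pi_pmf_lessThan_Suc:
  fixes g :: "(nat \<Rightarrow> 'a) \<Rightarrow> real"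
  assumes finQ: "finite (set_pmf Q)"
  shows "measure_pmf.expectation (Pi_pmf {..<Suc T} d (\<lambda>_. Q)) g
       = measure_pmf.expectation (Pi_pmf {..<T} d (\<lambda>_. Q))
           (\<lambda>f. measure_pmf.expectation Q (\<lambda>y. g (f(T := y))))"
proof -
  let ?P = "Pi_pmf {..<T} d (\<lambda>_. Q)"
  have finP: "finite (set_pmf ?P)" by (rule finite_set_pmf_Pi_pmf[OF finite_lessThan finQ])
  have "measure_pmf.expectation (Pi_pmf {..<Suc T} d (\<lambda>_. Q)) g
      = measure_pmf.expectation (pair_pmf Q ?P) (\<lambda>(y, f). g (f(T := y)))"
    unfolding lessThan_Suc by (subst Pi_pmf_insert) (auto simp: case_prod_unfold)
  also have "\<dots> = (\<Sum>z\<in>set_pmf Q \<times> set_pmf ?P. pmf (pair_pmf Q ?P) z * (\<lambda>(y, f). g (f(T := y))) z)"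
    using finQ finP by (subst integral_measure_pmf[of "set_pmf Q \<times> set_pmf ?P"]) auto
  also have "\<dots> = (\<Sum>y\<in>set_pmf Q. \<Sum>f\<in>set_pmf ?P. pmf Q y * pmf ?P f * g (f(T := y)))"
    by (simp add: sum.cartesian_product' pmf_pair)
  also have "\<dots> = (\<Sum>f\<in>set_pmf ?P. pmf ?P f * (\<Sum>y\<in>set_pmf Q. pmf Q y * g (f(T := y))))"
    by (subst sum.swap) (simp add: sum_distrib_left mult_ac)
  also have "\<dots> = measure_pmf.expectation ?P (\<lambda>f. measure_pmf.expectation Q (\<lambda>y. g (f(T := y))))"
    using finQ finP by (simp add: integral_measure_pmf[of "set_pmf Q"] integral_measure_pmf[of "set_pmf ?P"])
  finally show ?thesis .
qed

lemma expectation_sqdev_random_tendsto: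
  assumes conn: "connected_graph m E" and m: "2 \<le> m" and \<alpha>: "0 < \<alpha>" "\<alpha> < 1"
    and QE: "set_pmf Q = E"
  shows "(\<lambda>T. measure_pmf.expectation (Pi_pmf {..<T} d (\<lambda>_. Q))
            (\<lambda>w. sqdev m (mean m x) (avg_traj \<alpha> x w T))) \<longlonglongrightarrow> 0"
proof -
  let ?P = "\<lambda>T::nat. Pi_pmf {..<T} d (\<lambda>_. Q)" and ?c = "mean m x"
  let ?V = "\<lambda>T w. sqdev m ?c (avg_traj \<alpha> x w T)"
  have finE: "finite E" using connected_graph_finite[OF conn] .
  have finQ: "finite (set_pmf Q)" using finE QE by simp
  have finP: "finite (set_pmf (?P T))" for T by (rule finite_set_pmf_Pi_pmf[OF finite_lessThan finQ])
  define p where "p = Min (pmf Q ` E)"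
  have p: "0 < p" "\<forall>e\<in>E. p \<le> pmf Q e"
    unfolding p_def using finE connected_graph_nonempty[OF conn m] QE by (auto simp: set_pmf_eq')
  have sum1: "(\<Sum>e\<in>E. pmf Q e) = 1" using finE QE by (intro sum_pmf_eq_1) auto
  define \<kappa> where "\<kappa> = 2 * \<alpha> * (1 - \<alpha>) * p / poincare_const m E"
  have \<kappa>: "0 < \<kappa>" unfolding \<kappa>_def using poincare_const_pos[OF conn m] \<alpha> p by simp
  show ?thesis
  proof (rule contraction_tendsto_zero[OF \<kappa>])
    fix T
    have step: "measure_pmf.expectation Q (\<lambda>y. ?V (Suc T) (f(T := y))) \<le> (1 - \<kappa>) * ?V T f"
      if f: "f \<in> set_pmf (?P T)" for f
    proof -
      have "f ` {..<T} \<subseteq> {..<m} \<times> {..<m}"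
        using set_pmf_Pi_pmf_lessThan_image[OF f] QE connected_graph_edges_lessThan[OF conn] by blast
      then have mean: "mean m (avg_traj \<alpha> x f T) = ?c" by (rule mean_avg_traj)
      have "avg_traj \<alpha> x (f(T := y)) T = avg_traj \<alpha> x f T" for y
        by (rule avg_traj_cong) simp
      then have "measure_pmf.expectation Q (\<lambda>y. ?V (Suc T) (f(T := y)))
          = (\<Sum>e\<in>E. pmf Q e * sqdev m ?c (pair_avg \<alpha> (fst e) (snd e) (avg_traj \<alpha> x f T)))"
        using finE QE by (subst integral_measure_pmf[of E]) auto
      also have "\<dots> \<le> (1 - \<kappa>) * ?V T f"
        using sum_sqdev_pair_avg_le[OF conn m _ _ p(2) _ sum1, of \<alpha> "avg_traj \<alpha> x f T"] p \<alpha> mean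
        unfolding \<kappa>_def by simp
      finally show ?thesis .
    qed
    have "measure_pmf.expectation (?P (Suc T)) (?V (Suc T))
        = measure_pmf.expectation (?P T) (\<lambda>f. measure_pmf.expectation Q (\<lambda>y. ?V (Suc T) (f(T := y))))"
      by (rule expectation_Pi_pmf_lessThan_Suc[OF finQ])
    also have "\<dots> \<le> measure_pmf.expectation (?P T) (\<lambda>f. (1 - \<kappa>) * ?V T f)"
      using finP step by (intro integral_mono_AE integrable_measure_pmf_finite) (auto simp: AE_measure_pmf_iff)
    also have "\<dots> = (1 - \<kappa>) * measure_pmf.expectation (?P T) (?V T)"
      by simp
    finally show "measure_pmf.expectation (?P (Suc T)) (?V (Suc T))
        \<le> (1 - \<kappa>) * measure_pmf.expectation (?P T) (?V T)" .
  next
    show "0 \<le> measure_pmf.expectation (?P T) (?V T)" for T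
      by (intro integral_nonneg_AE) auto
  qed
qed

lemma prob_gt_tendsto_zero:
  fixes F :: "nat \<Rightarrow> 'a \<Rightarrow> real"
  assumes fin: "\<And>T. finite (set_pmf (M T))" and nonneg: "\<And>T w. 0 \<le> F T w"
    and lim: "(\<lambda>T. measure_pmf.expectation (M T) (F T)) \<longlonglongrightarrow> 0" and a: "0 < a"
  shows "(\<lambda>T. measure_pmf.prob (M T) {w. a < F T w}) \<longlonglongrightarrow> 0"
proof -
  have "measure_pmf.prob (M T) {w. a < F T w} \<le> measure_pmf.expectation (M T) (F T) / a" for T
  proof -
    have "measure_pmf.prob (M T) {w. a < F T w} \<le> measure_pmf.prob (M T) {w \<in> space (M T). a \<le> F T w}"
      by (intro measure_pmf.finite_measure_mono) auto
    also have "\<dots> \<le> measure_pmf.expectation (M T) (F T) / a"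
      using a nonneg by (intro integral_Markov_inequality_measure[OF integrable_measure_pmf_finite[OF fin], of "{}"]) auto
    finally show ?thesis .
  qed
  then have "\<forall>T. norm (measure_pmf.prob (M T) {w. a < F T w}) \<le> measure_pmf.expectation (M T) (F T) / a"
    by simp
  moreover have "(\<lambda>T. measure_pmf.expectation (M T) (F T) / a) \<longlonglongrightarrow> 0"
    using tendsto_divide_zero[OF lim] .
  ultimately show ?thesis by (rule Lim_null_comparison[OF always_eventually])
qed

section \<open>Reduction of quantum gossip to pairwise averaging\<close>

lemma finite_idx [simp]: "finite (idx m n)"
  unfolding idx_def by (intro finite_PiE) auto

lemma comp_transpose_in_idx:
  assumes "a \<in> idx m n" "j < m" "k < m"
  shows "a \<circ> Transposition.transpose j k \<in> idx m n"
  using assms unfolding idx_def by (auto simp: PiE_def extensional_def Transposition.transpose_def)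

lemma sum_idx_comp_transpose:
  assumes "j < m" "k < m"
  shows "(\<Sum>b\<in>idx m n. g (b \<circ> Transposition.transpose j k)) = (\<Sum>b\<in>idx m n. g b)"
proof (rule sum.reindex_bij_betw)
  show "bij_betw (\<lambda>b. b \<circ> Transposition.transpose j k) (idx m n) (idx m n)"
    by (rule bij_betw_byWitness[where f' = "\<lambda>b. b \<circ> Transposition.transpose j k"])
       (auto simp: comp_assoc comp_transpose_in_idx assms)
qed

lemma swap_conj_apply:
  assumes "a \<in> idx m n" "b \<in> idx m n" "j < m" "k < m"
  shows "mmul (idx m n) (mmul (idx m n) (swap_op j k) \<rho>) (adj (swap_op j k)) a b
       = \<rho> (a \<circ> Transposition.transpose j k) (b \<circ> Transposition.transpose j k)"
proof -
  let ?t = "Transposition.transpose j k"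
  have swap_eq: "(c = d \<circ> ?t) \<longleftrightarrow> (d = c \<circ> ?t)" for c d :: "nat \<Rightarrow> nat"
    by (auto simp: comp_assoc)
  have left: "mmul (idx m n) (swap_op j k) M a d = M (a \<circ> ?t) d" for M d
  proof -
    have "mmul (idx m n) (swap_op j k) M a d = (\<Sum>c\<in>idx m n. if c = a \<circ> ?t then M c d else 0)"
      unfolding mmul_def swap_op_def by (intro sum.cong refl) (simp add: swap_eq[of a])
    then show ?thesis using comp_transpose_in_idx[OF assms(1,3,4)] by simp
  qed
  have right: "mmul (idx m n) M (adj (swap_op j k)) c b = M c (b \<circ> ?t)" for M c
  proof -
    have "mmul (idx m n) M (adj (swap_op j k)) c b = (\<Sum>d\<in>idx m n. if d = b \<circ> ?t then M c d else 0)"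
      unfolding mmul_def swap_op_def adj_def by (intro sum.cong refl) (simp add: swap_eq[of b])
    then show ?thesis using comp_transpose_in_idx[OF assms(2-4)] by simp
  qed
  show ?thesis by (simp add: left right)
qed

lemma local_op_comp_transpose:
  assumes "j < m" "k < m" "l < m"
  shows "local_op m \<sigma> l (b \<circ> Transposition.transpose j k) (a \<circ> Transposition.transpose j k)
       = local_op m \<sigma> (Transposition.transpose j k l) b a"
proof -
  let ?t = "Transposition.transpose j k"
  have "?t ` ({..<m} - {l}) = {..<m} - {?t l}"
    using assms by (simp add: image_set_diff[OF inj_transpose])
  then have "(\<Prod>i\<in>{..<m} - {l}. if b (?t i) = a (?t i) then 1 else (0::complex))
      = (\<Prod>i\<in>{..<m} - {?t l}. if b i = a i then 1 else 0)"
    using prod.reindex[OF inj_on_transpose[of j k "{..<m} - {l}"], of "\<lambda>i. if b i = a i then 1 else (0::complex)"]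
    by (simp add: comp_def)
  then show ?thesis unfolding local_op_def by simp
qed

lemma zval_eq_sum:
  "zval m n \<sigma> \<rho> l = (\<Sum>a\<in>idx m n. \<Sum>b\<in>idx m n. \<rho> a b * local_op m \<sigma> l b a)"
  unfolding zval_def tr_def mmul_def by simp

lemma zval_lincomb:
  "zval m n \<sigma> (\<lambda>a b. c * A a b + d * B a b) l = c * zval m n \<sigma> A l + d * zval m n \<sigma> B l"
  unfolding zval_eq_sum by (simp add: algebra_simps sum.distrib sum_distrib_left)

lemma zval_sum:
  assumes "finite S"
  shows "zval m n \<sigma> (\<lambda>a b. \<Sum>e\<in>S. c e * G e a b) l = (\<Sum>e\<in>S. c e * zval m n \<sigma> (G e) l)"
  unfolding zval_eq_sum
  by (simp add: sum_distrib_left sum_distrib_right mult.assoc sum.swap[of _ S])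

text \<open>Conjugating by the swap relabels the tensor factors, so the observable on factor l becomes
  the one on factor (j k) l.\<close>
lemma zval_swap_conj:
  assumes "j < m" "k < m" "l < m"
  shows "zval m n \<sigma> (mmul (idx m n) (mmul (idx m n) (swap_op j k) \<rho>) (adj (swap_op j k))) l
       = zval m n \<sigma> \<rho> (Transposition.transpose j k l)"
proof -
  let ?t = "Transposition.transpose j k" and ?I = "idx m n" and ?L = "local_op m \<sigma> l"
  define F where "F a b = \<rho> a b * ?L (b \<circ> ?t) (a \<circ> ?t)" for a b
  have "zval m n \<sigma> (mmul ?I (mmul ?I (swap_op j k) \<rho>) (adj (swap_op j k))) l
      = (\<Sum>a\<in>?I. \<Sum>b\<in>?I. F (a \<circ> ?t) (b \<circ> ?t))"
    unfolding zval_eq_sum F_def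
    by (intro sum.cong refl) (simp add: swap_conj_apply assms comp_assoc)
  also have "\<dots> = (\<Sum>a\<in>?I. \<Sum>b\<in>?I. F (a \<circ> ?t) b)"
    by (rule sum.cong[OF refl]) (rule sum_idx_comp_transpose[OF assms(1,2)])
  also have "\<dots> = (\<Sum>a\<in>?I. \<Sum>b\<in>?I. F a b)"
    by (rule sum_idx_comp_transpose[OF assms(1,2), of "\<lambda>a. \<Sum>b\<in>?I. F a b"])
  also have "\<dots> = zval m n \<sigma> \<rho> (?t l)"
    unfolding zval_eq_sum F_def by (simp add: local_op_comp_transpose assms)
  finally show ?thesis .
qed

text \<open>Padding by 0 beyond m makes zvec commute exactly with pair_avg, because transpositions of
  factors below m fix every l \<ge> m.\<close>
definition zvec :: "nat \<Rightarrow> nat \<Rightarrow> (nat \<Rightarrow> nat \<Rightarrow> complex) \<Rightarrow> cop \<Rightarrow> nat \<Rightarrow> complex" where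
  "zvec m n \<sigma> \<rho> = (\<lambda>l. if l < m then zval m n \<sigma> \<rho> l else 0)"

lemma mean_zvec: "mean m (zvec m n \<sigma> \<rho>) = (\<Sum>k<m. zval m n \<sigma> \<rho> k) / of_nat m"
  by (simp add: mean_def zvec_def)

lemma sqdev_zvec: "sqdev m c (zvec m n \<sigma> \<rho>) = (\<Sum>l<m. (cmod (zval m n \<sigma> \<rho> l - c))\<^sup>2)"
  by (simp add: sqdev_def zvec_def)

lemma zvec_gossip_step:
  assumes "j < m" "k < m"
  shows "zvec m n \<sigma> (gossip_step (idx m n) \<alpha> j k \<rho>) = pair_avg \<alpha> j k (zvec m n \<sigma> \<rho>)"
proof
  fix l
  show "zvec m n \<sigma> (gossip_step (idx m n) \<alpha> j k \<rho>) l = pair_avg \<alpha> j k (zvec m n \<sigma> \<rho>) l"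
  proof (cases "l < m")
    case True
    then have "Transposition.transpose j k l < m"
      using assms by (simp add: Transposition.transpose_def)
    with True assms show ?thesis
      unfolding gossip_step_def by (simp add: zvec_def pair_avg_def zval_lincomb zval_swap_conj)
  next
    case False
    then have "Transposition.transpose j k l = l" using assms by simp
    with False show ?thesis by (simp add: zvec_def pair_avg_def)
  qed
qed

lemma zvec_sum:
  "finite S \<Longrightarrow> zvec m n \<sigma> (\<lambda>a b. \<Sum>e\<in>S. c e * G e a b) = (\<lambda>l. \<Sum>e\<in>S. c e * zvec m n \<sigma> (G e) l)"
  by (auto simp: zvec_def zval_sum)

lemma zvec_traj:
  "w ` {..<t} \<subseteq> {..<m} \<times> {..<m} \<Longrightarrow>
     zvec m n \<sigma> (traj (idx m n) \<alpha> \<rho>0 w t) = avg_traj \<alpha> (zvec m n \<sigma> \<rho>0) w t"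
  by (induction t) (auto simp: zvec_gossip_step lessThan_Suc)

lemma zvec_exp_traj:
  assumes "E \<subseteq> {..<m} \<times> {..<m}" "finite E"
  shows "zvec m n \<sigma> (exp_traj (idx m n) \<alpha> q E \<rho>0 t) = (expected_avg \<alpha> q E ^^ t) (zvec m n \<sigma> \<rho>0)"
proof (induction t)
  case (Suc t)
  let ?\<rho> = "exp_traj (idx m n) \<alpha> q E \<rho>0 t"
  have "zvec m n \<sigma> (exp_traj (idx m n) \<alpha> q E \<rho>0 (Suc t))
      = (\<lambda>l. \<Sum>e\<in>E. of_real (q e) * zvec m n \<sigma> (gossip_step (idx m n) \<alpha> (fst e) (snd e) ?\<rho>) l)"
    using assms(2) by (simp add: zvec_sum)
  also have "\<dots> = expected_avg \<alpha> q E (zvec m n \<sigma> ?\<rho>)"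
    unfolding expected_avg_def using assms(1) by (intro ext sum.cong refl) (auto simp: zvec_gossip_step)
  finally show ?case using Suc by simp
qed simp

lemma zval_traj_periodic_tendsto:
  assumes conn: "connected_graph m E" and m: "2 \<le> m" and \<alpha>: "0 < \<alpha>" "\<alpha> < 1"
    and es: "set es = E" and l: "l < m"
  shows "(\<lambda>t. zval m n \<sigma> (traj (idx m n) \<alpha> \<rho>0 (\<lambda>s. es ! (s mod length es)) t) l)
           \<longlonglongrightarrow> (\<Sum>k<m. zval m n \<sigma> \<rho>0 k) / of_nat m"
proof -
  let ?w = "\<lambda>s. es ! (s mod length es)"
  have p: "0 < length es" using connected_graph_nonempty[OF conn m] es by auto
  have "?w ` {..<length es} = (!) es ` {..<length es}"
    by (intro image_cong) auto
  then have round: "?w ` {..<length es} = E"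
    using es by (force simp: in_set_conv_nth)
  have "range ?w \<subseteq> E" using es p by auto
  then have valid: "?w ` {..<t} \<subseteq> {..<m} \<times> {..<m}" for t
    using connected_graph_edges_lessThan[OF conn] by blast
  have "zval m n \<sigma> (traj (idx m n) \<alpha> \<rho>0 ?w t) l = avg_traj \<alpha> (zvec m n \<sigma> \<rho>0) ?w t l" for t
    using fun_cong[where x = l, OF zvec_traj[OF valid]] l by (simp add: zvec_def)
  moreover have "(\<lambda>t. avg_traj \<alpha> (zvec m n \<sigma> \<rho>0) ?w t l) \<longlonglongrightarrow> mean m (zvec m n \<sigma> \<rho>0)"
    by (rule avg_traj_periodic_tendsto[OF conn m \<alpha> p _ round l]) simp
  ultimately show ?thesis by (simp add: mean_zvec)
qed

lemma zval_exp_traj_tendsto: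
  assumes conn: "connected_graph m E" and m: "2 \<le> m" and \<alpha>: "0 < \<alpha>" "\<alpha> < 1"
    and q: "\<forall>e\<in>E. 0 < q e" "(\<Sum>e\<in>E. q e) = 1" and l: "l < m"
  shows "(\<lambda>t. zval m n \<sigma> (exp_traj (idx m n) \<alpha> q E \<rho>0 t) l) \<longlonglongrightarrow> (\<Sum>k<m. zval m n \<sigma> \<rho>0 k) / of_nat m"
proof -
  have "zval m n \<sigma> (exp_traj (idx m n) \<alpha> q E \<rho>0 t) l = (expected_avg \<alpha> q E ^^ t) (zvec m n \<sigma> \<rho>0) l" for t
    using fun_cong[where x = l, OF zvec_exp_traj[OF connected_graph_edges_lessThan[OF conn] connected_graph_finite[OF conn]]] l
    by (simp add: zvec_def)
  then show ?thesis
    using expected_avg_iterate_tendsto[OF conn m \<alpha> q l, of "zvec m n \<sigma> \<rho>0"] by (simp add: mean_zvec)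
qed

lemma zval_traj_random_deviation:
  assumes conn: "connected_graph m E" and m: "2 \<le> m" and \<alpha>: "0 < \<alpha>" "\<alpha> < 1"
    and QE: "set_pmf Q = E" and \<delta>: "0 < \<delta>" and \<epsilon>: "0 < \<epsilon>"
  shows "\<exists>T. measure_pmf.prob (Pi_pmf {..<T} (0,0) (\<lambda>_. Q))
            {w. (\<Sum>l<m. (cmod (zval m n \<sigma> (traj (idx m n) \<alpha> \<rho>0 w T) l
                               - (\<Sum>k<m. zval m n \<sigma> \<rho>0 k) / of_nat m))\<^sup>2)
                > \<epsilon> * (\<Sum>l<m. (cmod (zval m n \<sigma> \<rho>0 l
                               - (\<Sum>k<m. zval m n \<sigma> \<rho>0 k) / of_nat m))\<^sup>2)} < \<delta>"
proof -
  let ?C = "(\<Sum>k<m. zval m n \<sigma> \<rho>0 k) / of_nat m"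
  let ?P = "\<lambda>T::nat. Pi_pmf {..<T} (0, 0) (\<lambda>_. Q)" and ?x = "zvec m n \<sigma> \<rho>0"
  define F where "F T w = sqdev m ?C (zvec m n \<sigma> (traj (idx m n) \<alpha> \<rho>0 w T))" for T w
  define V0 where "V0 = sqdev m ?C ?x"
  have event: "{w. (\<Sum>l<m. (cmod (zval m n \<sigma> (traj (idx m n) \<alpha> \<rho>0 w T) l - ?C))\<^sup>2)
                > \<epsilon> * (\<Sum>l<m. (cmod (zval m n \<sigma> \<rho>0 l - ?C))\<^sup>2)} = {w. \<epsilon> * V0 < F T w}" for T
    unfolding F_def V0_def sqdev_zvec ..
  show ?thesis
  proof (cases "V0 = 0")
    case True
    then have "{w. \<epsilon> * V0 < F 0 w} = {}" unfolding F_def V0_def by simp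
    then show ?thesis using \<delta> unfolding event by (intro exI[of _ 0]) simp
  next
    case False
    then have V0: "0 < \<epsilon> * V0" using \<epsilon> unfolding V0_def by (simp add: order_less_le)
    have finQ: "finite (set_pmf Q)" using connected_graph_finite[OF conn] QE by simp
    have "measure_pmf.expectation (?P T) (F T)
        = measure_pmf.expectation (?P T) (\<lambda>w. sqdev m (mean m ?x) (avg_traj \<alpha> ?x w T))" for T
    proof (intro integral_cong_AE)
      have "w ` {..<T} \<subseteq> {..<m} \<times> {..<m}" if "w \<in> set_pmf (?P T)" for w
        using set_pmf_Pi_pmf_lessThan_image[OF that] QE connected_graph_edges_lessThan[OF conn] by blast
      then show "AE w in ?P T. F T w = sqdev m (mean m ?x) (avg_traj \<alpha> ?x w T)"
        unfolding F_def by (auto simp: AE_measure_pmf_iff zvec_traj mean_zvec)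
    qed auto
    then have lim: "(\<lambda>T. measure_pmf.expectation (?P T) (F T)) \<longlonglongrightarrow> 0"
      using expectation_sqdev_random_tendsto[OF conn m \<alpha> QE] by simp
    have "(\<lambda>T. measure_pmf.prob (?P T) {w. \<epsilon> * V0 < F T w}) \<longlonglongrightarrow> 0"
      by (rule prob_gt_tendsto_zero[OF finite_set_pmf_Pi_pmf[OF finite_lessThan finQ] _ lim V0])
         (simp add: F_def)
    then obtain T where "measure_pmf.prob (?P T) {w. \<epsilon> * V0 < F T w} < \<delta>"
      using \<delta> by (metis (no_types, lifting) eventually_sequentially order_tendstoD(2) order_refl)
    then show ?thesis unfolding event by blast
  qed
qed

theorem corollary1:
  fixes n m :: nat and E :: "(nat \<times> nat) set" and \<alpha> :: real
    and \<sigma> :: "nat \<Rightarrow> nat \<Rightarrow> complex" and \<rho>0 :: cop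
  assumes "2 \<le> n" and "2 \<le> m" and "connected_graph m E"
    and "0 < \<alpha>" and "\<alpha> < 1"
    and "self_adjoint_mat n \<sigma>" and "density_op (idx m n) \<rho>0"
  shows
   "(\<forall>es. distinct es \<and> set es = E \<longrightarrow>
       (\<forall>l<m. (\<lambda>t. zval m n \<sigma> (traj (idx m n) \<alpha> \<rho>0 (\<lambda>s. es ! (s mod length es)) t) l)
                \<longlonglongrightarrow> (\<Sum>k<m. zval m n \<sigma> \<rho>0 k) / of_nat m))
    \<and> (\<forall>q. (\<forall>e\<in>E. 0 < q e) \<and> (\<Sum>e\<in>E. q e) = 1 \<longrightarrow>
       (\<forall>l<m. (\<lambda>t. zval m n \<sigma> (exp_traj (idx m n) \<alpha> q E \<rho>0 t) l)
                \<longlonglongrightarrow> (\<Sum>k<m. zval m n \<sigma> \<rho>0 k) / of_nat m))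
    \<and> (\<forall>Q :: (nat \<times> nat) pmf. set_pmf Q = E \<longrightarrow>
       (\<forall>\<delta>>0. \<forall>\<epsilon>>0. \<exists>T.
          measure_pmf.prob (Pi_pmf {..<T} (0,0) (\<lambda>_. Q))
            {w. (\<Sum>l<m. (cmod (zval m n \<sigma> (traj (idx m n) \<alpha> \<rho>0 w T) l
                               - (\<Sum>k<m. zval m n \<sigma> \<rho>0 k) / of_nat m))\<^sup>2)
                > \<epsilon> * (\<Sum>l<m. (cmod (zval m n \<sigma> \<rho>0 l
                               - (\<Sum>k<m. zval m n \<sigma> \<rho>0 k) / of_nat m))\<^sup>2)}
          < \<delta>))"
  using zval_traj_periodic_tendsto[OF assms(3,2,4,5)] zval_exp_traj_tendsto[OF assms(3,2,4,5)]
    zval_traj_random_deviation[OF assms(3,2,4,5)]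
  by blast

end
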